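(* Let $\lambda\in(1,\infty)\setminus\mathbb{N}$ and let $\phi$ be one of the functions $\phi(x)=1$, $1-x$, $1-x^2$, $(1-x^2)^2$, $(1-x^3)^3$, $(1-x^2)^3$, or $e^{-\xi x}$ with $\xi>0$. Then the scheme $S_{1,\mathbf{w}^\lambda}$ preserves monotonicity: for every bounded non-decreasing initial sequence $\mathbf{f}^0$, the limit function $S^\infty_{1,\mathbf{w}^\lambda}\mathbf{f}^0$ is non-decreasing.
   Context: Put $w^\lambda_m=\phi(|m|/\lambda)$ for $m\in\mathbb{Z}$, $|m|<\lambda$, and $M_i=\{m\in\mathbb{Z}: m\equiv i \pmod 2,\ |m|<\lambda\}$, $i\in\{0,1\}$. The scheme $S_{1,\mathbf{w}^\lambda}$ (weighted local polynomial regression scheme of degree 1, coinciding with degree 0) is \[ (S_{1,\mathbf{w}^\lambda}\mathbf{f})_{2j+i}=\frac{\sum_{m\in M_i} w^\lambda_m f_{j+(m+i)/2}}{\sum_{m\in M_i} w^\lambda_m},\qquad i\in\{0,1\},\ j\in\mathbb{Z}. \] It is uniformly convergent; $S^\infty\mathbf{f}^0$ denotes the continuous limit $F$ with $\lim_{k\to\infty}\sup_j|(S^k\mathbf{f}^0)_j-F(2^{-k}j)|=0$. *)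

theory Defs
  imports "HOL-Analysis.Analysis"
begin

definition lpr_weight :: "(real \<Rightarrow> real) \<Rightarrow> real \<Rightarrow> int \<Rightarrow> real" where
  "lpr_weight phi lam m = phi (real_of_int \<bar>m\<bar> / lam)"

definition lpr_index :: "real \<Rightarrow> int \<Rightarrow> int set" where
  "lpr_index lam i = {m::int. m mod 2 = i mod 2 \<and> real_of_int \<bar>m\<bar> < lam}"

text \<open>The scheme S_{1,w^lambda}: (S f)_{2j+i} for i in {0,1}; here n = 2j+i with
  j = n div 2, i = n mod 2; (m+i)/2 is an integer since m = i (mod 2).\<close>
definition lpr_scheme :: "(real \<Rightarrow> real) \<Rightarrow> real \<Rightarrow> (int \<Rightarrow> real) \<Rightarrow> (int \<Rightarrow> real)" where
  "lpr_scheme phi lam f n =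
     (let j = n div 2; i = n mod 2 in
        (\<Sum>m\<in>lpr_index lam i. lpr_weight phi lam m * f (j + (m + i) div 2))
        / (\<Sum>m\<in>lpr_index lam i. lpr_weight phi lam m))"

definition is_subdiv_limit :: "((int \<Rightarrow> real) \<Rightarrow> (int \<Rightarrow> real)) \<Rightarrow> (int \<Rightarrow> real) \<Rightarrow> (real \<Rightarrow> real) \<Rightarrow> bool" where
  "is_subdiv_limit S f F \<longleftrightarrow> continuous_on UNIV F \<and>
     (\<forall>\<epsilon>>0. \<exists>K. \<forall>k\<ge>K. \<forall>j::int. \<bar>(S ^^ k) f j - F (real_of_int j / 2 ^ k)\<bar> \<le> \<epsilon>)"

end

theory Submission
  imports Defs
begin

text \<open>
  Each listed \<open>s \<mapsto> phi \<bar>s\<bar>\<close> is a power of a nonnegative concave function on \<open>(-1, 1)\<close>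
  or the exponential of a concave one, so \<open>C a * C d \<le> C b * C c\<close> whenever \<open>[b, c]\<close> is
  obtained from \<open>[a, d]\<close> by moving both ends inwards by the same amount. For the weights
  \<open>w m\<close>, extended by zero outside \<open>\<bar>m\<bar> < lam\<close>, this gives \<open>w x * w (y + 1) \<le> w (x + 1) * w y\<close>
  for \<open>x < y\<close>. Now \<open>(S f) n\<close> is the average of the \<open>f k\<close> with weights \<open>w (2k - n)\<close>, and the
  inequality says that the weights for \<open>n + 1\<close> dominate those for \<open>n\<close> in likelihood ratio;
  by a Chebyshev-type sum inequality the average of a nondecreasing \<open>f\<close> can then only grow.
  So every iterate \<open>S\<^sup>k f0\<close> is nondecreasing, and so is its uniform limit.
\<close>

definition shift_log_concave_on :: "real set \<Rightarrow> (real \<Rightarrow> real) \<Rightarrow> bool" where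
  "shift_log_concave_on I C \<longleftrightarrow>
     (\<forall>a b c d. a \<in> I \<longrightarrow> d \<in> I \<longrightarrow> a \<le> b \<longrightarrow> b \<le> c \<longrightarrow> c \<le> d \<longrightarrow> b - a = d - c
        \<longrightarrow> C a * C d \<le> C b * C c)"

lemma concave_on_inner_lower_bounds:
  fixes g :: "real \<Rightarrow> real"
  assumes g: "concave_on I g" and I: "a \<in> I" "d \<in> I"
    and abcd: "a \<le> b" "b \<le> c" "c \<le> d" "b - a = d - c"
  obtains t where "0 \<le> t" "t \<le> 1"
    "(1 - t) * g a + t * g d \<le> g b" "t * g a + (1 - t) * g d \<le> g c"
proof (cases "a = d")
  case True
  with abcd have "b = a" "c = a" by auto
  with True show ?thesis by (intro that[of 0]) auto
next
  case False
  define t where "t = (b - a) / (d - a)"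
  have ad: "d - a > 0" using False abcd by simp
  have t: "0 \<le> t" "t \<le> 1" using abcd ad by (simp_all add: t_def)
  have "t * (d - a) = b - a" using ad by (simp add: t_def)
  then have "b = (1 - t) * a + t * d" "c = (1 - (1 - t)) * a + (1 - t) * d"
    using abcd(4) by (simp_all add: algebra_simps)
  with concave_onD[OF g, of t a d] concave_onD[OF g, of "1 - t" a d] t I
  show ?thesis by (intro that[of t]) auto
qed

lemma concave_nonneg_imp_shift_log_concave_on:
  assumes g: "concave_on I g" and nonneg: "\<And>x. x \<in> I \<Longrightarrow> 0 \<le> g x"
  shows "shift_log_concave_on I g"
  unfolding shift_log_concave_on_def
proof (intro allI impI)
  fix a b c d
  assume I: "a \<in> I" "d \<in> I" and abcd: "a \<le> b" "b \<le> c" "c \<le> d" "b - a = d - c"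
  obtain t where t: "0 \<le> t" "t \<le> 1"
    and gb: "(1 - t) * g a + t * g d \<le> g b" and gc: "t * g a + (1 - t) * g d \<le> g c"
    using concave_on_inner_lower_bounds[OF g I abcd] .
  have ga: "0 \<le> g a" and gd: "0 \<le> g d" using nonneg I by auto
  have "g a * g d \<le> g a * g d + t * (1 - t) * (g a - g d)\<^sup>2"
    using t by simp
  also have "\<dots> = ((1 - t) * g a + t * g d) * (t * g a + (1 - t) * g d)"
    by (simp add: algebra_simps power2_eq_square)
  also have "\<dots> \<le> g b * g c"
    using gb gc t ga gd by (intro mult_mono) (auto intro: order_trans[OF _ gb])
  finally show "g a * g d \<le> g b * g c" .
qed

lemma exp_concave_imp_shift_log_concave_on:
  assumes g: "concave_on I g"
  shows "shift_log_concave_on I (\<lambda>x. exp (g x))"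
  unfolding shift_log_concave_on_def
proof (intro allI impI)
  fix a b c d
  assume I: "a \<in> I" "d \<in> I" and abcd: "a \<le> b" "b \<le> c" "c \<le> d" "b - a = d - c"
  obtain t where "0 \<le> t" "t \<le> 1"
    and "(1 - t) * g a + t * g d \<le> g b" "t * g a + (1 - t) * g d \<le> g c"
    using concave_on_inner_lower_bounds[OF g I abcd] .
  then have "g a + g d \<le> g b + g c" by (simp add: algebra_simps)
  then show "exp (g a) * exp (g d) \<le> exp (g b) * exp (g c)"
    by (simp flip: exp_add)
qed

lemma shift_log_concave_on_power:
  assumes C: "shift_log_concave_on I C" and nonneg: "\<And>x. x \<in> I \<Longrightarrow> 0 \<le> C x"
  shows "shift_log_concave_on I (\<lambda>x. C x ^ n)"
  unfolding shift_log_concave_on_def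
proof (intro allI impI)
  fix a b c d
  assume I: "a \<in> I" "d \<in> I" and abcd: "a \<le> b" "b \<le> c" "c \<le> d" "b - a = d - c"
  have "(C a * C d) ^ n \<le> (C b * C c) ^ n"
    using C I abcd nonneg unfolding shift_log_concave_on_def by (intro power_mono) auto
  then show "C a ^ n * C d ^ n \<le> C b ^ n * C c ^ n"
    by (simp add: power_mult_distrib)
qed

lemma convex_on_abs_power: "convex_on UNIV (\<lambda>x::real. \<bar>x\<bar> ^ n)"
proof (cases "even n")
  case True
  then show ?thesis using convex_power_even[of n] by (simp add: power_even_abs)
next
  case False
  show ?thesis
  proof (rule convex_onI)
    fix t x y :: real
    assume t: "0 < t" "t < 1"
    have "\<bar>(1 - t) * x + t * y\<bar> ^ n \<le> ((1 - t) * \<bar>x\<bar> + t * \<bar>y\<bar>) ^ n"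
      using t abs_triangle_ineq[of "(1 - t) * x" "t * y"]
      by (intro power_mono) (auto simp: abs_mult)
    also have "\<dots> \<le> (1 - t) * \<bar>x\<bar> ^ n + t * \<bar>y\<bar> ^ n"
      using convex_onD[OF convex_power_odd[OF False], of t "\<bar>x\<bar>" "\<bar>y\<bar>"] t by simp
    finally show "\<bar>(1 - t) *\<^sub>R x + t *\<^sub>R y\<bar> ^ n \<le> (1 - t) * \<bar>x\<bar> ^ n + t * \<bar>y\<bar> ^ n"
      by simp
  qed simp
qed

definition lpr_admissible :: "(real \<Rightarrow> real) \<Rightarrow> bool" where
  "lpr_admissible phi \<longleftrightarrow> (\<forall>t. 0 \<le> t \<longrightarrow> t < 1 \<longrightarrow> 0 < phi t)
     \<and> shift_log_concave_on {-1<..<1} (\<lambda>s. phi \<bar>s\<bar>)"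

lemma lpr_admissible_one_minus_power:
  assumes "k > 0"
  shows "lpr_admissible (\<lambda>x. (1 - x ^ k) ^ n)"
proof -
  have lt1: "t ^ k < 1" if "0 \<le> t" "t < 1" for t :: real
    using that assms by (simp add: power_less_one_iff)
  have "concave_on {-1<..<1} (\<lambda>s. 1 - \<bar>s\<bar> ^ k)"
    by (intro concave_on_diff convex_on_subset[OF convex_on_abs_power])
      (auto simp: concave_on_const)
  moreover have "0 \<le> 1 - \<bar>s\<bar> ^ k" if "s \<in> {-1<..<1}" for s :: real
    using lt1[of "\<bar>s\<bar>"] that by (simp add: abs_less_iff less_imp_le)
  ultimately have "shift_log_concave_on {-1<..<1} (\<lambda>s. (1 - \<bar>s\<bar> ^ k) ^ n)"
    by (intro shift_log_concave_on_power concave_nonneg_imp_shift_log_concave_on)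
  with lt1 show ?thesis by (simp add: lpr_admissible_def)
qed

lemma lpr_admissible_exp:
  assumes "\<xi> \<ge> 0"
  shows "lpr_admissible (\<lambda>x. exp (- \<xi> * x))"
proof -
  have "concave_on {-1<..<1} (\<lambda>s. - \<xi> * \<bar>s\<bar>)"
    using convex_on_cmul[OF assms convex_on_subset[OF convex_on_abs_power[of 1]]]
    by (simp add: concave_on_def)
  then show ?thesis
    by (simp add: lpr_admissible_def exp_concave_imp_shift_log_concave_on)
qed

lemma lpr_admissible_listed:
  assumes "phi = (\<lambda>x. 1) \<or> phi = (\<lambda>x. 1 - x) \<or> phi = (\<lambda>x. 1 - x ^ 2)
      \<or> phi = (\<lambda>x. (1 - x ^ 2) ^ 2) \<or> phi = (\<lambda>x. (1 - x ^ 3) ^ 3)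
      \<or> phi = (\<lambda>x. (1 - x ^ 2) ^ 3) \<or> (\<exists>\<xi>>0. phi = (\<lambda>x. exp (- \<xi> * x)))"
  shows "lpr_admissible phi"
  using assms lpr_admissible_one_minus_power[of 1 0] lpr_admissible_one_minus_power[of 1 1]
    lpr_admissible_one_minus_power[of 2 1] lpr_admissible_one_minus_power[of 2 2]
    lpr_admissible_one_minus_power[of 3 3] lpr_admissible_one_minus_power[of 2 3]
    lpr_admissible_exp
  by (elim disjE exE conjE) auto

text \<open>The weight \<open>w\<^sup>\<lambda>\<^sub>m\<close> extended by zero to all of \<open>\<int>\<close>, so that the sums over \<open>M\<^sub>0\<close> and
  \<open>M\<^sub>1\<close> become sums over one common window of indices.\<close>

definition lpr_weight_ext :: "(real \<Rightarrow> real) \<Rightarrow> real \<Rightarrow> int \<Rightarrow> real" where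
  "lpr_weight_ext phi lam m = (if real_of_int \<bar>m\<bar> < lam then lpr_weight phi lam m else 0)"

lemma lpr_weight_ext_pos:
  "lpr_admissible phi \<Longrightarrow> lam > 0 \<Longrightarrow> real_of_int \<bar>m\<bar> < lam \<Longrightarrow> 0 < lpr_weight_ext phi lam m"
  by (simp add: lpr_weight_ext_def lpr_weight_def lpr_admissible_def)

lemma lpr_weight_ext_nonneg:
  "lpr_admissible phi \<Longrightarrow> lam > 0 \<Longrightarrow> 0 \<le> lpr_weight_ext phi lam m"
  using lpr_weight_ext_pos[of phi lam m] by (auto simp: lpr_weight_ext_def)

lemma lpr_weight_ext_exchange:
  assumes phi: "lpr_admissible phi" and lam: "lam > 0" and xy: "x < y"
  shows "lpr_weight_ext phi lam x * lpr_weight_ext phi lam (y + 1)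
    \<le> lpr_weight_ext phi lam (x + 1) * lpr_weight_ext phi lam y"
proof (cases "real_of_int \<bar>x\<bar> < lam \<and> real_of_int \<bar>y + 1\<bar> < lam")
  case True
  have C: "shift_log_concave_on {-1<..<1} (\<lambda>s. phi \<bar>s\<bar>)"
    using phi by (simp add: lpr_admissible_def)
  have "phi \<bar>x / lam\<bar> * phi \<bar>(y + 1) / lam\<bar> \<le> phi \<bar>(x + 1) / lam\<bar> * phi \<bar>y / lam\<bar>"
    using C unfolding shift_log_concave_on_def
  proof (elim allE impE)
    show "x / lam \<in> {-1<..<1}" "(y + 1) / lam \<in> {-1<..<1}"
      using True xy lam by (auto simp: field_simps)
    show "x / lam \<le> (x + 1) / lam" "(x + 1) / lam \<le> y / lam" "y / lam \<le> (y + 1) / lam"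
      "(x + 1) / lam - x / lam = (y + 1) / lam - y / lam"
      using xy lam by (simp_all add: divide_right_mono diff_divide_distrib[symmetric])
  qed
  moreover have "real_of_int \<bar>x + 1\<bar> < lam" "real_of_int \<bar>y\<bar> < lam"
    using True xy by auto
  ultimately show ?thesis
    using True lam by (simp add: lpr_weight_ext_def lpr_weight_def abs_divide)
next
  case False
  then have "lpr_weight_ext phi lam x * lpr_weight_ext phi lam (y + 1) = 0"
    by (auto simp: lpr_weight_ext_def)
  moreover have "0 \<le> lpr_weight_ext phi lam (x + 1) * lpr_weight_ext phi lam y"
    using lpr_weight_ext_nonneg[OF phi lam] by simp
  ultimately show ?thesis by linarith
qed

lemma weighted_average_le_likelihood_ratio:
  fixes P Q g :: "'a::linorder \<Rightarrow> real"
  assumes T: "finite T" and P: "\<And>k. k \<in> T \<Longrightarrow> 0 \<le> P k" and Q: "\<And>k. k \<in> T \<Longrightarrow> 0 \<le> Q k"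
    and sP: "0 < sum P T" and sQ: "0 < sum Q T"
    and ratio: "\<And>k l. k \<in> T \<Longrightarrow> l \<in> T \<Longrightarrow> k < l \<Longrightarrow> P l * Q k \<le> P k * Q l"
    and g: "mono g"
  shows "(\<Sum>k\<in>T. P k * g k) / sum P T \<le> (\<Sum>k\<in>T. Q k * g k) / sum Q T"
proof -
  define D where "D = (\<Sum>k\<in>T. \<Sum>l\<in>T. P k * Q l * (g l - g k))"
  have D_eq: "D = (\<Sum>k\<in>T. Q k * g k) * sum P T - (\<Sum>k\<in>T. P k * g k) * sum Q T"
    by (simp add: D_def algebra_simps sum_subtractf sum_distrib_left sum_distrib_right)
      (subst sum.swap, simp add: algebra_simps)
  have "2 * D = (\<Sum>k\<in>T. \<Sum>l\<in>T. (P k * Q l - P l * Q k) * (g l - g k))"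
    unfolding mult_2 by (subst (2) D_def, subst sum.swap)
      (simp add: D_def sum.distrib[symmetric] algebra_simps)
  also have "\<dots> \<ge> 0"
  proof (intro sum_nonneg)
    fix k l assume kl: "k \<in> T" "l \<in> T"
    consider "k < l" | "k = l" | "l < k" by fastforce
    then show "0 \<le> (P k * Q l - P l * Q k) * (g l - g k)"
    proof cases
      case 1
      then show ?thesis using ratio[OF kl 1] monoD[OF g, of k l] by simp
    next
      case 3
      then show ?thesis using ratio[of l k] kl monoD[OF g, of l k] by (simp add: mult_nonpos_nonpos)
    qed simp
  qed
  finally have "(\<Sum>k\<in>T. P k * g k) * sum Q T \<le> (\<Sum>k\<in>T. Q k * g k) * sum P T"
    using D_eq by simp
  then show ?thesis using sP sQ by (simp add: divide_le_eq le_divide_eq field_simps)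
qed

lemma lpr_scheme_sum_reindex:
  assumes T: "finite T" and supp: "\<And>k. real_of_int \<bar>2 * k - n\<bar> < lam \<Longrightarrow> k \<in> T"
  shows "(\<Sum>m\<in>lpr_index lam (n mod 2). lpr_weight phi lam m * g (n div 2 + (m + n mod 2) div 2))
       = (\<Sum>k\<in>T. lpr_weight_ext phi lam (2 * k - n) * g k)"
proof -
  have "(\<Sum>k\<in>T. lpr_weight_ext phi lam (2 * k - n) * g k)
      = (\<Sum>k\<in>{k\<in>T. real_of_int \<bar>2 * k - n\<bar> < lam}. lpr_weight phi lam (2 * k - n) * g k)"
    unfolding sum.inter_filter[OF T] by (rule sum.cong) (auto simp: lpr_weight_ext_def)
  also have "\<dots> = (\<Sum>m\<in>lpr_index lam (n mod 2). lpr_weight phi lam m * g (n div 2 + (m + n mod 2) div 2))"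
  proof (rule sum.reindex_bij_witness[where i = "\<lambda>m. (m + n) div 2" and j = "\<lambda>k. 2 * k - n"])
    fix m assume "m \<in> lpr_index lam (n mod 2)"
    then have m: "m mod 2 = n mod 2" "real_of_int \<bar>m\<bar> < lam" by (auto simp: lpr_index_def)
    then have k: "2 * ((m + n) div 2) - n = m" by presburger
    show "2 * ((m + n) div 2) - n = m" by (rule k)
    show "(m + n) div 2 \<in> {k\<in>T. real_of_int \<bar>2 * k - n\<bar> < lam}" using k m supp by simp
  next
    fix k
    have "(2 * k - n) mod 2 = n mod 2" "n div 2 + (2 * k - n + n mod 2) div 2 = k" by presburger+
    then show "k \<in> {k\<in>T. real_of_int \<bar>2 * k - n\<bar> < lam} \<Longrightarrow> 2 * k - n \<in> lpr_index lam (n mod 2)"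
      and "lpr_weight phi lam (2 * k - n) * g (n div 2 + (2 * k - n + n mod 2) div 2)
        = lpr_weight phi lam (2 * k - n) * g k"
      by (simp_all add: lpr_index_def)
  qed simp
  finally show ?thesis by simp
qed

lemma lpr_scheme_eq_average:
  assumes "finite T" and "\<And>k. real_of_int \<bar>2 * k - n\<bar> < lam \<Longrightarrow> k \<in> T"
  shows "lpr_scheme phi lam f n
    = (\<Sum>k\<in>T. lpr_weight_ext phi lam (2 * k - n) * f k) / (\<Sum>k\<in>T. lpr_weight_ext phi lam (2 * k - n))"
  using lpr_scheme_sum_reindex[OF assms, where g = f] lpr_scheme_sum_reindex[OF assms, where g = "\<lambda>_. 1"]
  by (simp add: lpr_scheme_def Let_def)

lemma lpr_weight_ext_sum_pos:
  assumes phi: "lpr_admissible phi" and lam: "lam > 1"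
    and T: "finite T" "\<And>k. real_of_int \<bar>2 * k - n\<bar> < lam \<Longrightarrow> k \<in> T"
  shows "0 < (\<Sum>k\<in>T. lpr_weight_ext phi lam (2 * k - n))"
proof -
  define k0 where "k0 = n div 2 + n mod 2"
  have "2 * k0 - n = n mod 2" unfolding k0_def by presburger
  then have k0: "real_of_int \<bar>2 * k0 - n\<bar> < lam" using lam by auto
  have "0 < lpr_weight_ext phi lam (2 * k0 - n)"
    using lpr_weight_ext_pos[OF phi _ k0] lam by simp
  also have "\<dots> \<le> (\<Sum>k\<in>T. lpr_weight_ext phi lam (2 * k - n))"
    using T k0 lpr_weight_ext_nonneg[OF phi] lam by (intro member_le_sum) auto
  finally show ?thesis .
qed

lemma abs_le_of_abs_double_diff:
  fixes k n :: int
  assumes "real_of_int \<bar>2 * k - n\<bar> < lam"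
  shows "\<bar>k\<bar> \<le> \<bar>n\<bar> + \<lceil>lam\<rceil>"
proof -
  have "\<bar>2 * k - n\<bar> < \<lceil>lam\<rceil>" using assms le_of_int_ceiling[of lam] by linarith
  then show ?thesis by linarith
qed

lemma lpr_scheme_le_succ:
  assumes phi: "lpr_admissible phi" and lam: "lam > 1" and f: "mono f"
  shows "lpr_scheme phi lam f n \<le> lpr_scheme phi lam f (n + 1)"
proof -
  define R where "R = \<bar>n\<bar> + \<lceil>lam\<rceil> + 1"
  have T: "finite {-R..R}" by simp
  have supp: "\<And>k. real_of_int \<bar>2 * k - n\<bar> < lam \<Longrightarrow> k \<in> {-R..R}"
    "\<And>k. real_of_int \<bar>2 * k - (n + 1)\<bar> < lam \<Longrightarrow> k \<in> {-R..R}"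
    using abs_le_of_abs_double_diff[of _ n lam] abs_le_of_abs_double_diff[of _ "n + 1" lam]
    unfolding R_def by fastforce+
  let ?P = "\<lambda>k. lpr_weight_ext phi lam (2 * k - n)"
  let ?Q = "\<lambda>k. lpr_weight_ext phi lam (2 * k - (n + 1))"
  have "(\<Sum>k\<in>{-R..R}. ?P k * f k) / sum ?P {-R..R} \<le> (\<Sum>k\<in>{-R..R}. ?Q k * f k) / sum ?Q {-R..R}"
  proof (rule weighted_average_le_likelihood_ratio[OF T _ _ _ _ _ f])
    show "0 < sum ?P {-R..R}" "0 < sum ?Q {-R..R}"
      using lpr_weight_ext_sum_pos[OF phi lam T supp(1)] lpr_weight_ext_sum_pos[OF phi lam T supp(2)]
      by simp_all
    fix k l :: int assume "k < l"
    then show "?P l * ?Q k \<le> ?P k * ?Q l"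
      using lpr_weight_ext_exchange[OF phi _ , where x = "2 * k - (n + 1)" and y = "2 * l - (n + 1)"] lam
      by (simp add: algebra_simps)
  qed (use lpr_weight_ext_nonneg[OF phi] lam in auto)
  then show ?thesis
    by (simp add: lpr_scheme_eq_average[OF T supp(1)] lpr_scheme_eq_average[OF T supp(2)])
qed

lemma mono_int_if_le_succ:
  fixes h :: "int \<Rightarrow> 'a::order"
  assumes "\<And>n. h n \<le> h (n + 1)"
  shows "mono h"
proof (rule monoI)
  fix x y :: int assume "x \<le> y"
  then show "h x \<le> h y"
  proof (induction y rule: int_ge_induct)
    case (step i)
    then show ?case using assms[of i] order_trans by blast
  qed simp
qed

lemma mono_lpr_scheme_funpow:
  assumes "lpr_admissible phi" and "lam > 1" and "mono f"
  shows "mono ((lpr_scheme phi lam ^^ k) f)"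
  using assms(3) by (induction k) (auto intro: mono_int_if_le_succ lpr_scheme_le_succ[OF assms(1,2)])

lemma floor_dyadic_tendsto: "(\<lambda>k::nat. real_of_int \<lfloor>x * 2 ^ k\<rfloor> / 2 ^ k) \<longlonglongrightarrow> x"
proof (rule tendsto_sandwich[of "\<lambda>k. x - (1 / 2) ^ k" _ _ "\<lambda>_. x"])
  have "x - (1 / 2) ^ k \<le> real_of_int \<lfloor>x * 2 ^ k\<rfloor> / 2 ^ k" for k :: nat
  proof -
    have "x - (1 / 2) ^ k = (x * 2 ^ k - 1) / 2 ^ k"
      by (simp add: power_one_over field_simps)
    also have "\<dots> \<le> real_of_int \<lfloor>x * 2 ^ k\<rfloor> / 2 ^ k"
      using real_of_int_floor_add_one_gt[of "x * 2 ^ k"] by (intro divide_right_mono) auto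
    finally show ?thesis .
  qed
  then show "\<forall>\<^sub>F k in sequentially. x - (1 / 2) ^ k \<le> real_of_int \<lfloor>x * 2 ^ k\<rfloor> / 2 ^ k"
    by simp
  show "\<forall>\<^sub>F k in sequentially. real_of_int \<lfloor>x * 2 ^ k\<rfloor> / 2 ^ k \<le> x"
    by (auto simp: divide_le_eq)
  show "(\<lambda>k. x - (1 / 2) ^ k) \<longlonglongrightarrow> x"
    using tendsto_diff[OF tendsto_const LIMSEQ_realpow_zero[of "1 / 2"]] by simp
qed simp

lemma subdiv_limit_sample_tendsto:
  assumes "is_subdiv_limit S f F"
  shows "(\<lambda>k. (S ^^ k) f \<lfloor>x * 2 ^ k\<rfloor>) \<longlonglongrightarrow> F x"
proof -
  let ?j = "\<lambda>k::nat. \<lfloor>x * 2 ^ k\<rfloor>"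
  have cont: "isCont F x" and unif: "\<And>\<epsilon>. \<epsilon> > 0 \<Longrightarrow> \<exists>K. \<forall>k\<ge>K. \<forall>j. \<bar>(S ^^ k) f j - F (real_of_int j / 2 ^ k)\<bar> \<le> \<epsilon>"
    using assms by (auto simp: is_subdiv_limit_def continuous_on_eq_continuous_at)
  have "(\<lambda>k. F (real_of_int (?j k) / 2 ^ k)) \<longlonglongrightarrow> F x"
    by (rule isCont_tendsto_compose[OF cont floor_dyadic_tendsto])
  moreover have "(\<lambda>k. (S ^^ k) f (?j k) - F (real_of_int (?j k) / 2 ^ k)) \<longlonglongrightarrow> 0"
  proof (rule LIMSEQ_I)
    fix r :: real assume "0 < r"
    then obtain K where K: "\<And>k j. k \<ge> K \<Longrightarrow> \<bar>(S ^^ k) f j - F (real_of_int j / 2 ^ k)\<bar> \<le> r / 2"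
      using unif[of "r / 2"] by auto
    show "\<exists>K. \<forall>k\<ge>K. norm ((S ^^ k) f (?j k) - F (real_of_int (?j k) / 2 ^ k) - 0) < r"
    proof (intro exI allI impI)
      fix k assume "K \<le> k"
      then have "\<bar>(S ^^ k) f (?j k) - F (real_of_int (?j k) / 2 ^ k)\<bar> \<le> r / 2" by (rule K)
      with \<open>0 < r\<close> show "norm ((S ^^ k) f (?j k) - F (real_of_int (?j k) / 2 ^ k) - 0) < r" by simp
    qed
  qed
  ultimately show ?thesis by (rule Lim_transform)
qed

lemma mono_subdiv_limit:
  assumes mono: "\<And>k. mono ((S ^^ k) f)" and limit: "is_subdiv_limit S f F"
  shows "mono F"
proof (rule monoI)
  fix x y :: real assume "x \<le> y"
  then have "(S ^^ k) f \<lfloor>x * 2 ^ k\<rfloor> \<le> (S ^^ k) f \<lfloor>y * 2 ^ k\<rfloor>" for k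
    by (intro monoD[OF mono] floor_mono mult_right_mono) auto
  then show "F x \<le> F y"
    by (intro LIMSEQ_le[OF subdiv_limit_sample_tendsto[OF limit] subdiv_limit_sample_tendsto[OF limit]]) auto
qed

theorem corollary4p7:
  fixes phi :: "real \<Rightarrow> real" and lam :: real
    and f0 :: "int \<Rightarrow> real" and F :: "real \<Rightarrow> real"
  assumes lam: "lam > 1" "lam \<notin> \<nat>"
    and phi: "phi = (\<lambda>x. 1) \<or> phi = (\<lambda>x. 1 - x) \<or> phi = (\<lambda>x. 1 - x ^ 2)
      \<or> phi = (\<lambda>x. (1 - x ^ 2) ^ 2) \<or> phi = (\<lambda>x. (1 - x ^ 3) ^ 3)
      \<or> phi = (\<lambda>x. (1 - x ^ 2) ^ 3) \<or> (\<exists>\<xi>>0. phi = (\<lambda>x. exp (- \<xi> * x)))"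
    and bounded: "\<exists>B. \<forall>j. \<bar>f0 j\<bar> \<le> B"
    and nondec: "mono f0"
    and limit: "is_subdiv_limit (lpr_scheme phi lam) f0 F"
  shows "mono F"
proof (rule mono_subdiv_limit[OF _ limit])
  have "lpr_admissible phi" using phi by (rule lpr_admissible_listed)
  then show "mono ((lpr_scheme phi lam ^^ k) f0)" for k
    using lam(1) nondec by (rule mono_lpr_scheme_funpow)
qed

end
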